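(* Given $f:\{0,1\}^n\to\mathbb{R}$, there exists $g:\{0,1\}^{n+1}\to\mathbb{R}$ such that: (1) if $f$ is monotonically non-increasing, then $g$ is submodular; (2) if $f$ is $\epsilon$-far from being monotonically non-increasing, then $g$ is $\epsilon/2$-far from being submodular; (3) each value $g(z)$ can be computed by looking at (at most) $2$ values of $f$.
   Context: $f$ is monotonically non-increasing if $f(x)\ge f(y)$ whenever $x\le y$ coordinatewise. $g$ is submodular if $g(x+\mathbf{e}_i)-g(x)\ge g(y+\mathbf{e}_i)-g(y)$ for all $i$ and $x\le y$ with $x_i=y_i=0$, where $\mathbf{e}_i$ is the $i$-th standard basis vector. A function on a hypercube $\{0,1\}^m$ is $\epsilon$-far from a property if every function with the property differs from it on more than an $\epsilon$ fraction of the $2^m$ points. *)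

theory Defs
  imports Complex_Main
begin

text \<open>The hypercube {0,1}^n, a point being identified with the set of
coordinates (in {0..n-1}) equal to 1. Coordinatewise order is inclusion,
and x + e_i (for x_i = 0) is insert i x.\<close>
definition cube :: "nat \<Rightarrow> nat set set" where
  "cube n = Pow {..<n}"

definition mono_nonincr :: "nat \<Rightarrow> (nat set \<Rightarrow> real) \<Rightarrow> bool" where
  "mono_nonincr n f \<longleftrightarrow> (\<forall>x\<in>cube n. \<forall>y\<in>cube n. x \<subseteq> y \<longrightarrow> f y \<le> f x)"

definition submodular :: "nat \<Rightarrow> (nat set \<Rightarrow> real) \<Rightarrow> bool" where
  "submodular n g \<longleftrightarrow> (\<forall>i<n. \<forall>x\<in>cube n. \<forall>y\<in>cube n. x \<subseteq> y \<and> i \<notin> y \<longrightarrow>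
      g (insert i x) - g x \<ge> g (insert i y) - g y)"

definition far :: "nat \<Rightarrow> ((nat set \<Rightarrow> real) \<Rightarrow> bool) \<Rightarrow> real \<Rightarrow> (nat set \<Rightarrow> real) \<Rightarrow> bool" where
  "far n P eps f \<longleftrightarrow> (\<forall>h. P h \<longrightarrow> real (card {x\<in>cube n. f x \<noteq> h x}) > eps * 2 ^ n)"

end

theory Submission
  imports Defs
begin

text \<open>The point S of the (n+1)-cube is split into x = S - {n} and the top bit. Along coordinates i \<noteq> n the concave
quadratic makes every marginal drop by at least 8 once |x| grows, which swamps the
arctan differences (each of size < pi < 4), so only the case x = y, where monotonicity of f
is used, needs care; along coordinate n the marginal is arctan (f x), and
submodularity in that direction is exactly monotonicity of arctan \<circ> f.
Conversely, from a submodular h the function x \<mapsto> tan (h(x + e_n) - h x), clipped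
to the range of f, is non-increasing and agrees with f wherever h agrees with g at
both x and x + e_n; so f is changed on at most as many points as g.\<close>

definition submodular_embedding :: "nat \<Rightarrow> (nat set \<Rightarrow> real) \<Rightarrow> nat set \<Rightarrow> real" where
  "submodular_embedding n f S =
     -4 * (real (card (S - {n})))\<^sup>2 + (if n \<in> S then arctan (f (S - {n})) else 0)"

lemma finite_cube: "finite (cube n)"
  by (simp add: cube_def)

lemma finite_in_cube: "x \<in> cube n \<Longrightarrow> finite x"
  unfolding cube_def by (auto intro: finite_subset)

lemma cube_Suc_diff_top: "S \<in> cube (Suc n) \<Longrightarrow> S - {n} \<in> cube n"
  unfolding cube_def by auto

lemma top_notin_cube: "x \<in> cube n \<Longrightarrow> n \<notin> x"
  unfolding cube_def by auto

lemma cube_subset_cube_Suc: "x \<in> cube n \<Longrightarrow> x \<in> cube (Suc n)"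
  and insert_top_in_cube_Suc: "x \<in> cube n \<Longrightarrow> insert n x \<in> cube (Suc n)"
  unfolding cube_def by auto

lemma abs_arctan_diff_less: "\<bar>arctan a - arctan b\<bar> < 4"
  using arctan_bounded[of a] arctan_bounded[of b] pi_less_4 by auto

lemma submodular_embedding_marginal_top:
  assumes "n \<notin> S"
  shows "submodular_embedding n f (insert n S) - submodular_embedding n f S = arctan (f S)"
proof -
  have "insert n S - {n} = S" "S - {n} = S" using assms by auto
  then show ?thesis using assms by (simp add: submodular_embedding_def)
qed

lemma submodular_embedding_marginal:
  assumes "i \<noteq> n" "i \<notin> S" "finite S"
  shows "submodular_embedding n f (insert i S) - submodular_embedding n f S =
     -4 * (2 * real (card (S - {n})) + 1) +
     (if n \<in> S then arctan (f (insert i (S - {n}))) - arctan (f (S - {n})) else 0)"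
proof -
  have top: "insert i S - {n} = insert i (S - {n})" using assms by auto
  have card: "card (insert i (S - {n})) = card (S - {n}) + 1" using assms by simp
  show ?thesis unfolding submodular_embedding_def top card
    using assms by (simp add: power2_eq_square algebra_simps)
qed

lemma submodular_embedding_of_mono_nonincr:
  assumes mono: "mono_nonincr n f"
  shows "submodular (Suc n) (submodular_embedding n f)"
  unfolding submodular_def
proof (intro allI impI ballI)
  let ?g = "submodular_embedding n f"
  fix i S T assume i: "i < Suc n" and S: "S \<in> cube (Suc n)" and T: "T \<in> cube (Suc n)"
    and ST: "S \<subseteq> T \<and> i \<notin> T"
  define x where "x = S - {n}"
  define y where "y = T - {n}"
  have x: "x \<in> cube n" and y: "y \<in> cube n"
    using S T cube_Suc_diff_top unfolding x_def y_def by auto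
  have "x \<subseteq> y" using ST unfolding x_def y_def by auto
  show "?g (insert i T) - ?g T \<le> ?g (insert i S) - ?g S"
  proof (cases "i = n")
    case True
    then have "S = x" "T = y" "n \<notin> x" "n \<notin> y" using ST unfolding x_def y_def by auto
    then have "?g (insert i S) - ?g S = arctan (f x)" "?g (insert i T) - ?g T = arctan (f y)"
      using True by (simp_all add: submodular_embedding_marginal_top)
    moreover have "f y \<le> f x" using mono x y \<open>x \<subseteq> y\<close> unfolding mono_nonincr_def by blast
    then have "arctan (f y) \<le> arctan (f x)" by (simp add: arctan_le_iff)
    ultimately show ?thesis by linarith
  next
    case False
    have "i \<notin> S" using ST by blast
    note marg_S = submodular_embedding_marginal[OF False this finite_in_cube[OF S], of f, folded x_def]
    note marg_T = submodular_embedding_marginal[OF False _ finite_in_cube[OF T], of f, folded y_def]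
    have "card x \<le> card y" using \<open>x \<subseteq> y\<close> y finite_in_cube card_mono by blast
    then consider "card x < card y" | "x = y"
      using \<open>x \<subseteq> y\<close> y finite_in_cube card_subset_eq by (metis le_neq_implies_less)
    then show ?thesis
    proof cases
      case 1
      then have "real (card x) + 1 \<le> real (card y)" by simp
      then show ?thesis using marg_S marg_T ST
        abs_arctan_diff_less[of "f (insert i x)" "f x"] abs_arctan_diff_less[of "f (insert i y)" "f y"]
        by (auto split: if_splits)
    next
      case 2
      have "insert i x \<in> cube n" using x i False unfolding cube_def by auto
      then have "f (insert i x) \<le> f x" using mono x unfolding mono_nonincr_def by blast
      then have "arctan (f (insert i x)) - arctan (f x) \<le> 0" by (simp add: arctan_le_iff)
      moreover have "n \<in> S \<Longrightarrow> n \<in> T" using ST by blast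
      ultimately show ?thesis using marg_S marg_T ST \<open>x = y\<close> by auto
    qed
  qed
qed

lemma mono_arctan_left_inverse:
  fixes K :: real
  obtains \<psi> :: "real \<Rightarrow> real" where "mono \<psi>" and "\<And>a. \<bar>a\<bar> \<le> K \<Longrightarrow> \<psi> (arctan a) = a"
proof
  \<comment> \<open>clipping the argument to [-arctan |K|, arctan |K|] keeps tan monotone\<close>
  let ?c = "arctan \<bar>K\<bar>"
  let ?clip = "\<lambda>s. max (- ?c) (min ?c s)"
  have c: "?c < pi / 2" using arctan_ubound by blast
  show "mono (\<lambda>s. tan (?clip s))"
  proof (rule monoI)
    fix s t :: real assume "s \<le> t"
    have "0 \<le> ?c" using arctan_le_iff[of 0 "\<bar>K\<bar>"] by simp
    then have "- ?c \<le> ?clip s" "?clip t \<le> ?c" by auto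
    then have "- (pi / 2) < ?clip s" "?clip t < pi / 2" using c by linarith+
    moreover have "?clip s \<le> ?clip t" using \<open>s \<le> t\<close> by (auto simp: min.coboundedI2 max.coboundedI2)
    ultimately show "tan (?clip s) \<le> tan (?clip t)" by (intro tan_mono_le)
  qed
  fix a :: real assume "\<bar>a\<bar> \<le> K"
  then have "- ?c \<le> arctan a" "arctan a \<le> ?c"
    by (simp_all add: arctan_le_iff flip: arctan_minus)
  then show "tan (?clip (arctan a)) = a" by (simp add: tan_arctan)
qed

lemma mono_nonincr_top_marginal:
  assumes "submodular (Suc n) h" and "mono \<psi>"
  shows "mono_nonincr n (\<lambda>x. \<psi> (h (insert n x) - h x))"
  unfolding mono_nonincr_def
proof (intro ballI impI)
  fix x y assume x: "x \<in> cube n" and y: "y \<in> cube n" and "x \<subseteq> y"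
  have "x \<in> cube (Suc n)" "y \<in> cube (Suc n)" "n \<notin> y"
    using x y by (simp_all add: cube_subset_cube_Suc top_notin_cube)
  with assms(1) \<open>x \<subseteq> y\<close> have "h (insert n y) - h y \<le> h (insert n x) - h x"
    unfolding submodular_def by blast
  then show "\<psi> (h (insert n y) - h y) \<le> \<psi> (h (insert n x) - h x)"
    by (rule monoD[OF assms(2)])
qed

lemma submodular_embedding_far:
  assumes far: "far n (mono_nonincr n) eps f"
  shows "far (Suc n) (submodular (Suc n)) (eps / 2) (submodular_embedding n f)"
  unfolding far_def
proof (intro allI impI)
  let ?g = "submodular_embedding n f"
  fix h assume sub: "submodular (Suc n) h"
  define D where "D = {S \<in> cube (Suc n). ?g S \<noteq> h S}"
  define K where "K = Max ((\<lambda>x. \<bar>f x\<bar>) ` cube n)"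
  have K: "\<bar>f x\<bar> \<le> K" if "x \<in> cube n" for x
    unfolding K_def using that finite_cube by (intro Max_ge) auto
  obtain \<psi> where "mono \<psi>" and \<psi>: "\<And>a. \<bar>a\<bar> \<le> K \<Longrightarrow> \<psi> (arctan a) = a"
    using mono_arctan_left_inverse by blast
  define f' where "f' x = \<psi> (h (insert n x) - h x)" for x
  have "mono_nonincr n f'"
    unfolding f'_def using sub \<open>mono \<psi>\<close> by (rule mono_nonincr_top_marginal)
  then have many_changes: "eps * 2 ^ n < real (card {x \<in> cube n. f x \<noteq> f' x})"
    using far unfolding far_def by blast
  have "{x \<in> cube n. f x \<noteq> f' x} \<subseteq> (\<lambda>S. S - {n}) ` D"
  proof
    fix x assume "x \<in> {x \<in> cube n. f x \<noteq> f' x}"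
    then have x: "x \<in> cube n" and "f x \<noteq> f' x" by auto
    have "n \<notin> x" using x by (rule top_notin_cube)
    have "x \<in> D \<or> insert n x \<in> D"
    proof (rule ccontr)
      assume "\<not> ?thesis"
      then have "?g x = h x" "?g (insert n x) = h (insert n x)"
        using cube_subset_cube_Suc[OF x] insert_top_in_cube_Suc[OF x] unfolding D_def by blast+
      then have "h (insert n x) - h x = ?g (insert n x) - ?g x" by simp
      also have "\<dots> = arctan (f x)"
        using \<open>n \<notin> x\<close> by (rule submodular_embedding_marginal_top)
      finally have "f' x = f x" unfolding f'_def using \<psi> K[OF x] by simp
      with \<open>f x \<noteq> f' x\<close> show False by simp
    qed
    moreover have "x - {n} = x" "insert n x - {n} = x" using \<open>n \<notin> x\<close> by auto
    ultimately show "x \<in> (\<lambda>S. S - {n}) ` D" by (metis image_eqI)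
  qed
  then have "card {x \<in> cube n. f x \<noteq> f' x} \<le> card ((\<lambda>S. S - {n}) ` D)"
    by (simp add: card_mono D_def finite_cube)
  also have "\<dots> \<le> card D" by (simp add: card_image_le D_def finite_cube)
  finally show "eps / 2 * 2 ^ Suc n < real (card {S \<in> cube (Suc n). ?g S \<noteq> h S})"
    using many_changes unfolding D_def by simp
qed

theorem lemma11:
  fixes n :: nat
  shows "\<exists>G :: (nat set \<Rightarrow> real) \<Rightarrow> (nat set \<Rightarrow> real).
    (\<forall>f. mono_nonincr n f \<longrightarrow> submodular (Suc n) (G f)) \<and>
    (\<forall>f eps. far n (mono_nonincr n) eps f \<longrightarrow> far (Suc n) (submodular (Suc n)) (eps / 2) (G f)) \<and>
    (\<forall>z\<in>cube (Suc n). \<exists>p\<in>cube n. \<exists>q\<in>cube n. \<exists>h :: real \<Rightarrow> real \<Rightarrow> real.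
        \<forall>f. G f z = h (f p) (f q))"
proof (intro exI[of _ "submodular_embedding n"] conjI allI impI ballI)
  fix f assume "mono_nonincr n f"
  then show "submodular (Suc n) (submodular_embedding n f)"
    by (rule submodular_embedding_of_mono_nonincr)
next
  fix f eps assume "far n (mono_nonincr n) eps f"
  then show "far (Suc n) (submodular (Suc n)) (eps / 2) (submodular_embedding n f)"
    by (rule submodular_embedding_far)
next
  fix z assume "z \<in> cube (Suc n)"
  then have p: "z - {n} \<in> cube n" by (rule cube_Suc_diff_top)
  let ?h = "\<lambda>a b. -4 * (real (card (z - {n})))\<^sup>2 + (if n \<in> z then arctan a else 0)"
  show "\<exists>p\<in>cube n. \<exists>q\<in>cube n. \<exists>h :: real \<Rightarrow> real \<Rightarrow> real.
      \<forall>f. submodular_embedding n f z = h (f p) (f q)"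
    by (rule bexI[OF _ p], rule bexI[OF _ p], rule exI[of _ ?h]) (simp add: submodular_embedding_def)
qed

end
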